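(* Let $\beta>0$, $\gamma\in[1,\infty)$, $a>-1$ and let $C$ be any constant. Then the integral operators on $L^2[0,1]$ with kernels \[ k_{C,\gamma}(x,y)=C\exp\big[CT^{3/4}(x)+CT^{3/4}(y)\big]\frac{\sqrt{2y+\gamma-1}}{(2x+\gamma-1)^{-1/2}}\frac{(y^2+\gamma y-y)^{a/2}}{(x^2+\gamma x-x)^{(a+1)/2}}\mathbf 1_{\{y<x\}}, \] where $T(x)=\frac1\beta\big(\log\frac1x+\log\frac1{\gamma-1+x}\big)$, and \[ k_C(x,y)=C\exp\big[C(\log(1/x))^{3/4}+C(\log(1/y))^{3/4}\big]y^{a/2}x^{-(a+1)/2}\mathbf 1_{\{y<x\}} \] are Hilbert–Schmidt. *)

theory Defs
  imports "HOL-Analysis.Analysis"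
begin

text \<open>An integral operator on L^2[0,1] with kernel k is Hilbert-Schmidt iff k is in L^2([0,1]^2),
  i.e. k is (Lebesgue/Borel) measurable on the unit square and its square is integrable there.\<close>
definition hilbert_schmidt_kernel :: "(real \<Rightarrow> real \<Rightarrow> real) \<Rightarrow> bool" where
  "hilbert_schmidt_kernel k \<longleftrightarrow>
     set_borel_measurable lborel ({0..1} \<times> {0..1}) (\<lambda>(x, y). k x y) \<and>
     set_integrable lborel ({0..1} \<times> {0..1}) (\<lambda>(x, y). (k x y)\<^sup>2)"

definition T_fun :: "real \<Rightarrow> real \<Rightarrow> real \<Rightarrow> real" where
  "T_fun \<beta> \<gamma> x = (1 / \<beta>) * (ln (1 / x) + ln (1 / (\<gamma> - 1 + x)))"

end

theory Submission
  imports Defs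
begin

text \<open>
  The exponential factors grow more slowly than any negative power: by Young's inequality
  c w^(3/4) \<le> \<epsilon> w + c (c/\<epsilon>)^3, and both |T(x)| and log(1/x) are O(log(1/x)), so
  exp(C |T(x)|^(3/4)) = O(x^(-\<delta>)) for every \<delta> > 0. The algebraic part of each kernel is
  O(y^(p/2) x^(-(p+1)/2)) on y < x for some p > -1 (p = a, or p = 2a + 1 when \<gamma> = 1).
  So the squared kernel is O(y^(p-2\<delta>) x^(-p-1-2\<delta>)); trading the surplus power of y for
  the same power of x \<ge> y bounds it by y^(-s) x^(-t) with s, t < 1, which is integrable on
  the unit square.
\<close>

lemma set_integrable_powr_unit_interval:
  fixes t :: real
  assumes "t < 1"
  shows "set_integrable lborel {0..1} (\<lambda>x::real. x powr (-t))"
proof -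
  have "(\<lambda>x::real. x powr (-t)) integrable_on {0..1}"
    by (rule integrable_on_powr_from_0) (use assms in auto)
  then have "(\<lambda>x::real. x powr (-t)) absolutely_integrable_on {0..1}"
    by (rule nonnegative_absolutely_integrable_1) auto
  then show ?thesis
    unfolding set_integrable_def by (simp add: integrable_completion)
qed

lemma (in pair_sigma_finite) set_integrable_mult_fst_snd:
  fixes f :: "'a \<Rightarrow> real" and g :: "'b \<Rightarrow> real"
  assumes f: "set_integrable M1 A f" and g: "set_integrable M2 B g"
  shows "set_integrable (M1 \<Otimes>\<^sub>M M2) (A \<times> B) (\<lambda>(x, y). f x * g y)"
proof -
  let ?f = "\<lambda>x. indicator A x *\<^sub>R f x" and ?g = "\<lambda>y. indicator B y *\<^sub>R g y"
  have [measurable]: "?f \<in> borel_measurable M1" "?g \<in> borel_measurable M2"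
    using f g by (auto simp: set_integrable_def)
  have "integrable (M1 \<Otimes>\<^sub>M M2) (\<lambda>z. ?f (fst z) * ?g (snd z))"
  proof (rule Fubini_integrable)
    have "integrable M1 (\<lambda>x. norm (?f x) * (\<integral>y. norm (?g y) \<partial>M2))"
      using f by (simp add: set_integrable_def)
    then show "integrable M1 (\<lambda>x. \<integral>y. norm (?f (fst (x, y)) * ?g (snd (x, y))) \<partial>M2)"
      by (simp only: fst_conv snd_conv norm_mult integral_mult_right_zero)
    show "AE x in M1. integrable M2 (\<lambda>y. ?f (fst (x, y)) * ?g (snd (x, y)))"
      using g by (simp add: set_integrable_def)
  qed measurable
  moreover have "(\<lambda>z. indicator (A \<times> B) z *\<^sub>R (case z of (x, y) \<Rightarrow> f x * g y))
      = (\<lambda>z. ?f (fst z) * ?g (snd z))"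
    by (auto simp: fun_eq_iff split: split_indicator)
  ultimately show ?thesis
    unfolding set_integrable_def by simp
qed

lemma powr_mult_powr_le_shift:
  fixes x y q r s :: real
  assumes "0 \<le> y" "y \<le> x" "s \<le> q"
  shows "y powr q * x powr r \<le> y powr s * x powr (q - s + r)"
proof (cases "y = 0")
  case False
  have "y powr q = y powr s * y powr (q - s)"
    by (simp add: powr_add[symmetric])
  also have "\<dots> \<le> y powr s * x powr (q - s)"
    using assms by (intro mult_left_mono powr_mono2) auto
  finally have "y powr q * x powr r \<le> y powr s * x powr (q - s) * x powr r"
    by (rule mult_right_mono) simp
  then show ?thesis
    by (simp add: powr_add mult.assoc)
qed simp

lemma hilbert_schmidt_kernel_of_powr_bound:
  fixes k :: "real \<Rightarrow> real \<Rightarrow> real" and p :: real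
  assumes meas: "set_borel_measurable lborel ({0..1} \<times> {0..1}) (\<lambda>(x, y). k x y)"
    and p: "p > -1"
    and vanishes: "\<And>x y. \<not> y < x \<Longrightarrow> k x y = 0"
    and bound: "\<And>\<delta>. \<delta> > 0 \<Longrightarrow> \<exists>M. \<forall>x y. 0 \<le> y \<longrightarrow> y < x \<longrightarrow> x \<le> 1 \<longrightarrow>
                  \<bar>k x y\<bar> \<le> M * (y powr (p/2 - \<delta>) * x powr (-(p+1)/2 - \<delta>))"
  shows "hilbert_schmidt_kernel k"
proof -
  define m where "m = min (p + 1) 1"
  have m: "0 < m" "m \<le> p + 1" "m \<le> 1"
    using p by (auto simp: m_def)
  obtain M where M: "\<And>x y. 0 \<le> y \<Longrightarrow> y < x \<Longrightarrow> x \<le> 1 \<Longrightarrow>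
      \<bar>k x y\<bar> \<le> M * (y powr (p/2 - m/16) * x powr (-(p+1)/2 - m/16))"
    using bound[of "m/16"] m by auto
  define s t where "s = 1 - m/2" and "t = 3*m/4"
  \<comment> \<open>With \<open>\<delta> = m/16\<close>, moving the surplus power of \<open>y\<close> onto \<open>x \<ge> y\<close> leaves exponents \<open>-s, -t > -1\<close>.\<close>
  have square_bound: "(k x y)\<^sup>2 \<le> M\<^sup>2 * (x powr (-t) * y powr (-s))"
    if "x \<in> {0..1}" "y \<in> {0..1}" for x y
  proof (cases "y < x")
    case True
    have "\<bar>k x y\<bar>\<^sup>2 \<le> (M * (y powr (p/2 - m/16) * x powr (-(p+1)/2 - m/16)))\<^sup>2"
      using M[of y x] that True by (intro power_mono) auto
    also have "\<dots> = M\<^sup>2 * (y powr (p - m/8) * x powr (-(p+1) - m/8))"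
      by (simp add: power_mult_distrib power2_eq_square powr_add[symmetric] algebra_simps)
    also have "\<dots> \<le> M\<^sup>2 * (y powr (-s) * x powr (p - m/8 - (-s) + (-(p+1) - m/8)))"
      using that True m by (intro mult_left_mono powr_mult_powr_le_shift) (auto simp: s_def)
    also have "p - m/8 - (-s) + (-(p+1) - m/8) = -t"
      by (simp add: s_def t_def)
    finally show ?thesis
      by (simp add: mult.commute)
  qed (simp add: vanishes)
  have "t < 1" "s < 1"
    using m by (auto simp: s_def t_def)
  then have "set_integrable lborel ({0..1} \<times> {0..1}) (\<lambda>(x::real, y::real). x powr (-t) * y powr (-s))"
    using lborel_pair.set_integrable_mult_fst_snd[OF set_integrable_powr_unit_interval
        set_integrable_powr_unit_interval]
    by (simp add: lborel_prod)
  then have majorant: "set_integrable lborel ({0..1} \<times> {0..1})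
      (\<lambda>(x::real, y::real). M\<^sup>2 * (x powr (-t) * y powr (-s)))"
    by (simp add: case_prod_beta')
  have "set_borel_measurable lborel ({0..1} \<times> {0..1}) (\<lambda>(x, y). (k x y)\<^sup>2)"
  proof -
    have "(\<lambda>z. (indicator ({0..1} \<times> {0..1}) z *\<^sub>R (case z of (x, y) \<Rightarrow> k x y))\<^sup>2)
        \<in> borel_measurable lborel"
      using meas unfolding set_borel_measurable_def by measurable
    then show ?thesis
      unfolding set_borel_measurable_def by (rule measurable_cong[THEN iffD1, rotated])
        (auto simp: indicator_def)
  qed
  then have "set_integrable lborel ({0..1} \<times> {0..1}) (\<lambda>(x, y). (k x y)\<^sup>2)"
    by (rule set_integrable_bound[OF majorant])
      (auto intro!: always_eventually order_trans[OF _ abs_ge_self] square_bound)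
  then show ?thesis
    using meas unfolding hilbert_schmidt_kernel_def by simp
qed

lemma mult_powr_three_quarters_le:
  fixes c \<epsilon> w :: real
  assumes c: "c \<ge> 0" and \<epsilon>: "\<epsilon> > 0" and w: "w \<ge> 0"
  shows "c * w powr (3/4) \<le> \<epsilon> * w + c * (c/\<epsilon>)^3"
proof -
  have w34: "w powr (3/4) = (w powr (1/4))^3"
    by (cases "w = 0") (simp_all add: powr_realpow[symmetric] powr_powr)
  have w1: "w = w powr (1/4) * w powr (3/4)"
    using w by (cases "w = 0") (simp_all add: powr_add[symmetric])
  show ?thesis
  proof (cases "w powr (1/4) \<le> c/\<epsilon>")
    case True
    then have "w powr (3/4) \<le> (c/\<epsilon>)^3"
      unfolding w34 by (intro power_mono) auto
    then show ?thesis
      using c \<epsilon> w mult_left_mono[of "w powr (3/4)" "(c/\<epsilon>)^3" c] by (simp add: add_increasing)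
  next
    case False
    then have "c \<le> \<epsilon> * w powr (1/4)"
      using \<epsilon> by (simp add: field_simps)
    then have "c * w powr (3/4) \<le> \<epsilon> * w"
      using mult_right_mono[of c "\<epsilon> * w powr (1/4)" "w powr (3/4)"] w1
      by (simp add: mult.assoc)
    then show ?thesis
      using c \<epsilon> by (simp add: add_increasing2)
  qed
qed

lemma exp_mult_powr_three_quarters_le:
  fixes c A B \<delta> :: real
  assumes A: "A \<ge> 0" and \<delta>: "\<delta> > 0"
  shows "\<exists>K>0. \<forall>x w. 0 < x \<longrightarrow> x \<le> 1 \<longrightarrow> 0 \<le> w \<longrightarrow> w \<le> A * ln (1/x) + B \<longrightarrow>
            exp (c * w powr (3/4)) \<le> K * x powr (-\<delta>)"
proof (cases "c \<le> 0")
  case True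
  show ?thesis
  proof (intro exI[of _ 1] conjI allI impI)
    fix x w :: real
    assume x: "0 < x" "x \<le> 1" and w: "0 \<le> w"
    have "exp (c * w powr (3/4)) \<le> 1"
      using True w by (simp add: mult_nonpos_nonneg)
    also have "\<dots> \<le> x powr (-\<delta>)"
      using x \<delta> by (simp add: powr_minus one_le_inverse_iff powr_le1)
    finally show "exp (c * w powr (3/4)) \<le> 1 * x powr (-\<delta>)"
      by simp
  qed simp
next
  case False
  define \<epsilon> where "\<epsilon> = \<delta> / (A + 1)"
  have \<epsilon>: "\<epsilon> > 0" "\<epsilon> * A \<le> \<delta>"
    using \<delta> A by (auto simp: \<epsilon>_def field_simps)
  define K where "K = exp (\<epsilon> * B + c * (c/\<epsilon>)^3)"
  show ?thesis
  proof (intro exI[of _ K] conjI allI impI)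
    show "K > 0"
      by (simp add: K_def)
    fix x w :: real
    assume x: "0 < x" "x \<le> 1" and w: "0 \<le> w" and w_le: "w \<le> A * ln (1/x) + B"
    have "ln (1/x) \<ge> 0"
      using x by (simp add: ln_div)
    have "c * w powr (3/4) \<le> \<epsilon> * w + c * (c/\<epsilon>)^3"
      using mult_powr_three_quarters_le[of c \<epsilon> w] False \<epsilon> w by simp
    also have "\<dots> \<le> (\<epsilon> * A) * ln (1/x) + (\<epsilon> * B + c * (c/\<epsilon>)^3)"
      using mult_left_mono[OF w_le, of \<epsilon>] \<epsilon> by (simp add: algebra_simps)
    also have "\<dots> \<le> \<delta> * ln (1/x) + (\<epsilon> * B + c * (c/\<epsilon>)^3)"
      using \<epsilon> \<open>ln (1/x) \<ge> 0\<close> by (simp add: mult_right_mono)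
    finally have "exp (c * w powr (3/4)) \<le> exp (\<delta> * ln (1/x)) * K"
      by (simp add: K_def exp_add[symmetric])
    also have "exp (\<delta> * ln (1/x)) = x powr (-\<delta>)"
      using x by (simp add: powr_def ln_div)
    finally show "exp (c * w powr (3/4)) \<le> K * x powr (-\<delta>)"
      by (simp add: mult.commute)
  qed
qed

lemma hilbert_schmidt_kernel_exp_powr_three_quarters:
  fixes \<phi> :: "real \<Rightarrow> real" and g :: "real \<Rightarrow> real \<Rightarrow> real" and p A B G C :: real
  assumes p: "p > -1" and A: "A \<ge> 0"
    and [measurable]: "\<phi> \<in> borel_measurable borel"
    and g_measurable: "(\<lambda>(x, y). g x y) \<in> borel_measurable lborel"
    and \<phi>: "\<And>x. 0 < x \<Longrightarrow> x \<le> 1 \<Longrightarrow> 0 \<le> \<phi> x \<and> \<phi> x \<le> A * ln (1/x) + B"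
    and g: "\<And>x y. 0 \<le> y \<Longrightarrow> y < x \<Longrightarrow> x \<le> 1 \<Longrightarrow>
              \<bar>g x y\<bar> \<le> G * (y powr (p/2) * x powr (-(p+1)/2))"
  shows "hilbert_schmidt_kernel (\<lambda>x y.
           if y < x then C * exp (C * \<phi> x powr (3/4) + C * \<phi> y powr (3/4)) * g x y else 0)"
proof (rule hilbert_schmidt_kernel_of_powr_bound[OF _ p])
  have [measurable]: "(\<lambda>z. g (fst z) (snd z)) \<in> borel_measurable (lborel \<Otimes>\<^sub>M lborel)"
    using g_measurable by (simp add: lborel_prod case_prod_beta')
  show "set_borel_measurable lborel ({0..1} \<times> {0..1}) (\<lambda>(x, y).
      if y < x then C * exp (C * \<phi> x powr (3/4) + C * \<phi> y powr (3/4)) * g x y else 0)"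
    unfolding set_borel_measurable_def case_prod_beta' lborel_prod[symmetric] by measurable
next
  fix \<delta> :: real
  assume "\<delta> > 0"
  then obtain K where K: "K > 0" "\<And>x. 0 < x \<Longrightarrow> x \<le> 1 \<Longrightarrow>
      exp (C * \<phi> x powr (3/4)) \<le> K * x powr (-\<delta>)"
    using exp_mult_powr_three_quarters_le[OF A, of \<delta> B C] \<phi> by blast
  show "\<exists>M. \<forall>x y. 0 \<le> y \<longrightarrow> y < x \<longrightarrow> x \<le> 1 \<longrightarrow>
      \<bar>if y < x then C * exp (C * \<phi> x powr (3/4) + C * \<phi> y powr (3/4)) * g x y else 0\<bar>
        \<le> M * (y powr (p/2 - \<delta>) * x powr (-(p+1)/2 - \<delta>))"
  proof (intro exI[of _ "\<bar>C\<bar> * K\<^sup>2 * G"] allI impI)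
    fix x y :: real
    assume y: "0 \<le> y" and yx: "y < x" and x: "x \<le> 1"
    define w where "w = y powr (p/2) * x powr (-(p+1)/2)"
    show "\<bar>if y < x then C * exp (C * \<phi> x powr (3/4) + C * \<phi> y powr (3/4)) * g x y else 0\<bar>
        \<le> \<bar>C\<bar> * K\<^sup>2 * G * (y powr (p/2 - \<delta>) * x powr (-(p+1)/2 - \<delta>))"
    proof (cases "y = 0")
      case True
      \<comment> \<open>the weight vanishes at \<open>y = 0\<close>, hence so does \<open>g\<close>\<close>
      then show ?thesis
        using g[OF y yx x] by simp
    next
      case False
      then have "0 < y" "0 < x"
        using y yx by auto
      have "exp (C * \<phi> x powr (3/4) + C * \<phi> y powr (3/4)) \<le> (K * x powr (-\<delta>)) * (K * y powr (-\<delta>))"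
        unfolding exp_add using K \<open>0 < x\<close> \<open>0 < y\<close> x yx
        by (intro mult_mono) auto
      moreover have "\<bar>g x y\<bar> \<le> G * w" "0 \<le> G * w"
        using g[OF y yx x] unfolding w_def by (auto intro: order_trans[OF abs_ge_zero])
      ultimately have "\<bar>C * exp (C * \<phi> x powr (3/4) + C * \<phi> y powr (3/4)) * g x y\<bar>
          \<le> \<bar>C\<bar> * ((K * x powr (-\<delta>)) * (K * y powr (-\<delta>))) * (G * w)"
        by (simp add: abs_mult, intro mult_mono mult_left_mono) (use K(1) in auto)
      also have "\<dots> = \<bar>C\<bar> * K\<^sup>2 * G * (y powr (p/2) * y powr (-\<delta>) * (x powr (-(p+1)/2) * x powr (-\<delta>)))"
        by (simp add: w_def power2_eq_square algebra_simps)
      finally show ?thesis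
        using yx by (simp add: powr_add[symmetric])
    qed
  qed
qed simp

lemma abs_T_fun_le:
  fixes \<beta> \<gamma> x :: real
  assumes \<beta>: "\<beta> > 0" and \<gamma>: "\<gamma> \<ge> 1" and x: "0 < x" "x \<le> 1"
  shows "\<bar>T_fun \<beta> \<gamma> x\<bar> \<le> (2/\<beta>) * ln (1/x) + ln \<gamma> / \<beta>"
proof -
  have "\<bar>ln (\<gamma> - 1 + x)\<bar> \<le> - ln x + ln \<gamma>"
  proof (cases "\<gamma> - 1 + x \<ge> 1")
    case True
    have "ln (\<gamma> - 1 + x) \<le> ln \<gamma>" "ln x \<le> 0"
      using x True by auto
    moreover have "0 \<le> ln (\<gamma> - 1 + x)"
      using True by simp
    ultimately show ?thesis
      unfolding abs_le_iff by linarith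
  next
    case False
    have "ln x \<le> ln (\<gamma> - 1 + x)" "ln (\<gamma> - 1 + x) \<le> 0" "0 \<le> ln \<gamma>"
      using False \<gamma> x by auto
    then show ?thesis
      unfolding abs_le_iff by linarith
  qed
  moreover have "ln x \<le> 0"
    using x by simp
  ultimately have bound: "\<bar>- ln x - ln (\<gamma> - 1 + x)\<bar> \<le> - 2 * ln x + ln \<gamma>"
    unfolding abs_le_iff by linarith
  have "\<bar>T_fun \<beta> \<gamma> x\<bar> = \<bar>- ln x - ln (\<gamma> - 1 + x)\<bar> / \<beta>"
    using \<beta> \<gamma> x by (simp add: T_fun_def ln_div abs_divide abs_mult)
  also have "\<dots> \<le> (- 2 * ln x + ln \<gamma>) / \<beta>"
    using \<beta> bound by (simp add: divide_right_mono)
  also have "\<dots> = (2/\<beta>) * ln (1/x) + ln \<gamma> / \<beta>"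
    using x by (simp add: ln_div diff_divide_distrib add_divide_distrib)
  finally show ?thesis .
qed

definition algebraic_factor :: "real \<Rightarrow> real \<Rightarrow> real \<Rightarrow> real \<Rightarrow> real" where
  "algebraic_factor \<gamma> a x y =
     (sqrt (2 * y + \<gamma> - 1) / (2 * x + \<gamma> - 1) powr (-1/2))
       * ((y\<^sup>2 + \<gamma> * y - y) powr (a / 2) / (x\<^sup>2 + \<gamma> * x - x) powr ((a + 1) / 2))"

lemma algebraic_factor_eq:
  fixes \<gamma> a x y :: real
  assumes "\<gamma> \<ge> 1" "0 \<le> y" "0 < x"
  shows "algebraic_factor \<gamma> a x y = sqrt (2*y + (\<gamma>-1)) * sqrt (2*x + (\<gamma>-1))
           * (y powr (a/2) * (y + (\<gamma>-1)) powr (a/2)) / (x powr ((a+1)/2) * (x + (\<gamma>-1)) powr ((a+1)/2))"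
proof -
  have "y\<^sup>2 + \<gamma> * y - y = y * (y + (\<gamma>-1))" "x\<^sup>2 + \<gamma> * x - x = x * (x + (\<gamma>-1))"
    by (simp_all add: power2_eq_square algebra_simps)
  moreover have "(2 * x + \<gamma> - 1) powr (-1/2) = 1 / sqrt (2*x + (\<gamma>-1))"
    using assms by (simp add: powr_minus_divide powr_half_sqrt add_diff_eq)
  ultimately show ?thesis
    using assms by (simp add: algebraic_factor_def powr_mult add_diff_eq)
qed

lemma algebraic_factor_bound_gt_one:
  fixes \<gamma> a :: real
  assumes \<gamma>: "\<gamma> > 1"
  shows "\<exists>G. \<forall>x y. 0 \<le> y \<longrightarrow> y < x \<longrightarrow> x \<le> 1 \<longrightarrow>
           \<bar>algebraic_factor \<gamma> a x y\<bar> \<le> G * (y powr (a/2) * x powr (-(a+1)/2))"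
proof -
  define c where "c = \<gamma> - 1"
  have c: "c > 0"
    using \<gamma> by (simp add: c_def)
  \<comment> \<open>Once the power weight is split off, the rest is continuous up to the boundary since \<open>c > 0\<close>.\<close>
  define u v where "u y = sqrt (2*y + c) * (y + c) powr (a/2)"
    and "v x = sqrt (2*x + c) / (x + c) powr ((a+1)/2)" for x y :: real
  have "continuous_on {0..1} u" "continuous_on {0..1} v"
    unfolding u_def v_def using c by (auto intro!: continuous_intros)
  then obtain U V where U: "\<And>y. y \<in> {0..1} \<Longrightarrow> \<bar>u y\<bar> \<le> U"
    and V: "\<And>x. x \<in> {0..1} \<Longrightarrow> \<bar>v x\<bar> \<le> V"
    by (metis continuous_on_compact_bound compact_Icc real_norm_def)
  show ?thesis
  proof (intro exI[of _ "U * V"] allI impI)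
    fix x y :: real
    assume y: "0 \<le> y" and yx: "y < x" and x: "x \<le> 1"
    have "x powr (-(a+1)/2) = 1 / x powr ((a+1)/2)"
      using powr_minus_divide[of x "(a+1)/2"] by (simp add: minus_divide_left)
    then have "algebraic_factor \<gamma> a x y = u y * v x * (y powr (a/2) * x powr (-(a+1)/2))"
      using algebraic_factor_eq[OF _ y, of \<gamma> x a] \<gamma> y yx
      by (simp add: u_def v_def c_def ac_simps)
    also have "\<bar>\<dots>\<bar> \<le> U * V * (y powr (a/2) * x powr (-(a+1)/2))"
      using U[of y] V[of x] y yx x
      by (simp add: abs_mult mult_mono mult_right_mono)
    finally show "\<bar>algebraic_factor \<gamma> a x y\<bar> \<le> U * V * (y powr (a/2) * x powr (-(a+1)/2))" .
  qed
qed

lemma algebraic_factor_one_le: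
  fixes a x y :: real
  assumes y: "0 \<le> y" and yx: "y < x" and x: "x \<le> 1"
  shows "\<bar>algebraic_factor 1 a x y\<bar> \<le> 2 * (y powr ((2*a+1)/2) * x powr (-((2*a+1)+1)/2))"
proof -
  have x0: "0 < x"
    using y yx by simp
  have "sqrt (2*y) * sqrt (2*x) = 2 * (y powr (1/2) * x powr (1/2))"
    using y x0 by (simp add: real_sqrt_mult powr_half_sqrt)
  then have "algebraic_factor 1 a x y
      = 2 * ((y powr (1/2) * (y powr (a/2) * y powr (a/2)))
             * (x powr (1/2) / (x powr ((a+1)/2) * x powr ((a+1)/2))))"
    using algebraic_factor_eq[of 1 y x a] y x0 by simp
  also have "\<dots> = 2 * (y powr (1/2 + (a/2 + a/2)) * x powr (1/2 - ((a+1)/2 + (a+1)/2)))"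
    by (simp only: powr_add powr_diff)
  also have "1/2 + (a/2 + a/2) = (2*a+1)/2"
    by (simp add: field_simps)
  also have "1/2 - ((a+1)/2 + (a+1)/2) = -(2*a+1)/2"
    by (simp add: field_simps)
  finally have eq: "algebraic_factor 1 a x y = 2 * (y powr ((2*a+1)/2) * x powr (-(2*a+1)/2))" .
  have "x powr (-(2*a+1)/2) \<le> x powr (-((2*a+1)+1)/2)"
    using x0 x by (intro powr_mono') (auto simp: field_simps)
  then show ?thesis
    unfolding eq by (simp add: mult_left_mono)
qed

lemma algebraic_factor_bound:
  fixes \<gamma> a :: real
  assumes "\<gamma> \<ge> 1" "a > -1"
  obtains p G where "p > -1"
    "\<And>x y. 0 \<le> y \<Longrightarrow> y < x \<Longrightarrow> x \<le> 1 \<Longrightarrow>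
       \<bar>algebraic_factor \<gamma> a x y\<bar> \<le> G * (y powr (p/2) * x powr (-(p+1)/2))"
proof (cases "\<gamma> = 1")
  case True
  then show ?thesis
    using that[of "2*a+1" 2] algebraic_factor_one_le assms(2) by auto
next
  case False
  then obtain G where "\<forall>x y. 0 \<le> y \<longrightarrow> y < x \<longrightarrow> x \<le> 1 \<longrightarrow>
      \<bar>algebraic_factor \<gamma> a x y\<bar> \<le> G * (y powr (a/2) * x powr (-(a+1)/2))"
    using algebraic_factor_bound_gt_one[of \<gamma> a] assms(1) by auto
  then show ?thesis
    using that[of a G] assms(2) by auto
qed

lemma borel_measurable_algebraic_factor:
  "(\<lambda>(x, y). algebraic_factor \<gamma> a x y) \<in> borel_measurable lborel"
  unfolding algebraic_factor_def lborel_prod[symmetric] case_prod_beta' by measurable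

theorem proposition4p9:
  fixes \<beta> \<gamma> a C :: real
  assumes "\<beta> > 0" and "\<gamma> \<ge> 1" and "a > -1"
  shows "hilbert_schmidt_kernel (\<lambda>x y.
            (if y < x then
               C * exp (C * \<bar>T_fun \<beta> \<gamma> x\<bar> powr (3/4) + C * \<bar>T_fun \<beta> \<gamma> y\<bar> powr (3/4))
                 * (sqrt (2 * y + \<gamma> - 1) / (2 * x + \<gamma> - 1) powr (-1/2))
                 * ((y\<^sup>2 + \<gamma> * y - y) powr (a / 2) / (x\<^sup>2 + \<gamma> * x - x) powr ((a + 1) / 2))
             else 0))
       \<and> hilbert_schmidt_kernel (\<lambda>x y.
            (if y < x then
               C * exp (C * (ln (1 / x)) powr (3/4) + C * (ln (1 / y)) powr (3/4))
                 * y powr (a / 2) * x powr (-(a + 1) / 2)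
             else 0))"
proof -
  obtain p G where p: "p > -1" and G: "\<And>x y. 0 \<le> y \<Longrightarrow> y < x \<Longrightarrow> x \<le> 1 \<Longrightarrow>
      \<bar>algebraic_factor \<gamma> a x y\<bar> \<le> G * (y powr (p/2) * x powr (-(p+1)/2))"
    using algebraic_factor_bound[OF assms(2,3)] by blast
  have "(\<lambda>x. \<bar>T_fun \<beta> \<gamma> x\<bar>) \<in> borel_measurable borel"
    unfolding T_fun_def by measurable
  then have "hilbert_schmidt_kernel (\<lambda>x y. if y < x then
      C * exp (C * \<bar>T_fun \<beta> \<gamma> x\<bar> powr (3/4) + C * \<bar>T_fun \<beta> \<gamma> y\<bar> powr (3/4))
        * algebraic_factor \<gamma> a x y else 0)"
    using abs_T_fun_le[OF assms(1,2)] assms(1)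
    by (intro hilbert_schmidt_kernel_exp_powr_three_quarters[OF p _ _
          borel_measurable_algebraic_factor _ G, where A = "2/\<beta>" and B = "ln \<gamma> / \<beta>"]) auto
  moreover have "hilbert_schmidt_kernel (\<lambda>x y. if y < x then
      C * exp (C * ln (1 / x) powr (3/4) + C * ln (1 / y) powr (3/4))
        * (y powr (a / 2) * x powr (-(a + 1) / 2)) else 0)"
    using assms(3)
    by (intro hilbert_schmidt_kernel_exp_powr_three_quarters[where A = 1 and B = 0 and G = 1])
      (auto simp: lborel_prod[symmetric] case_prod_beta')
  ultimately show ?thesis
    by (simp only: algebraic_factor_def mult.assoc)
qed

end
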